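(* Let $C\ge 3$ be an integer and $r>0$. Define on $\mathbb{R}^C$ the functions $f(\mathbf{h})=H(\mathrm{softmax}(\mathbf{h}))$, $g_1(\mathbf{h})=\sum_{i=1}^C h_i$, and $g_2(\mathbf{h})=-\frac{r^2}{2}+\sum_{i=1}^C\frac{h_i^2}{2}$. Suppose $\mathbf{h}\in\mathbb{R}^C$ and $\lambda_1,\lambda_2\in\mathbb{R}$ satisfy $$\nabla f(\mathbf{h})+\lambda_1\nabla g_1(\mathbf{h})+\lambda_2\nabla g_2(\mathbf{h})=0.$$ If $\alpha,\beta,\gamma\in\{1,\dots,C\}$ satisfy $h_\alpha\ge h_\beta\ge h_\gamma$, then $h_\alpha=h_\beta$ or $h_\beta=h_\gamma$. (Consequently the coordinates of $\mathbf{h}$ take at most two distinct values.)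
   Context: For $\mathbf{h}=(h_1,\dots,h_C)\in\mathbb{R}^C$, $\mathrm{softmax}(\mathbf{h})\in\mathbb{R}^C$ is the probability vector with entries $y_i=e^{h_i}/\sum_{j=1}^C e^{h_j}$. For a probability vector $\mathbf{y}$, $H(\mathbf{y})=-\sum_{i=1}^C y_i\log y_i$ is its Shannon entropy (natural logarithm). Gradients are with respect to $\mathbf{h}$. *)

theory Defs
  imports "HOL-Analysis.Analysis"
begin

definition softmax :: "real ^ 'n \<Rightarrow> real ^ 'n" where
  "softmax h = (\<chi> i. exp (h $ i) / (\<Sum>j\<in>UNIV. exp (h $ j)))"

definition shannon_entropy :: "real ^ 'n \<Rightarrow> real" where
  "shannon_entropy y = - (\<Sum>i\<in>UNIV. y $ i * ln (y $ i))"

definition ent_f :: "real ^ 'n \<Rightarrow> real" where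
  "ent_f h = shannon_entropy (softmax h)"

definition sum_g1 :: "real ^ 'n \<Rightarrow> real" where
  "sum_g1 h = (\<Sum>i\<in>UNIV. h $ i)"

definition sphere_g2 :: "real \<Rightarrow> real ^ 'n \<Rightarrow> real" where
  "sphere_g2 r h = - (r ^ 2 / 2) + (\<Sum>i\<in>UNIV. (h $ i) ^ 2 / 2)"

end

theory Submission
  imports Defs
begin

text \<open>
  Write \<open>y = softmax h\<close>, \<open>Z = \<Sum>\<^sub>j exp h\<^sub>j\<close> and \<open>m = \<Sum>\<^sub>j y\<^sub>j h\<^sub>j\<close>. The gradient of the
  entropy is \<open>-y\<^sub>k (h\<^sub>k - m)\<close>, so stationarity says that every coordinate \<open>h\<^sub>k\<close> is a point
  where the line \<open>\<lambda>\<^sub>1 + \<lambda>\<^sub>2 t\<close> meets the curve \<open>e\<^sup>t (t - m) / Z\<close>.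
  If three coordinates were distinct, Rolle's theorem applied twice would put a point where
  the line is tangent to the curve to the left of the curve's only inflection point \<open>m - 2\<close>,
  where the curve is decreasing; hence \<open>\<lambda>\<^sub>2 < 0\<close>. On the other hand, summing the
  stationarity equations gives \<open>\<Sum>\<^sub>k (\<lambda>\<^sub>1 + \<lambda>\<^sub>2 h\<^sub>k) = 0\<close>, while for \<open>\<lambda>\<^sub>2 \<le> 0\<close> every
  summand is at most its value at the smallest coordinate, which is negative because the
  smallest coordinate lies strictly below the mean \<open>m\<close>.
\<close>

definition softmax_mean :: "real ^ 'n \<Rightarrow> real" where
  "softmax_mean h = (\<Sum>j\<in>UNIV. softmax h $ j * h $ j)"

lemma softmax_nth: "softmax h $ k = exp (h $ k) / (\<Sum>j\<in>UNIV. exp (h $ j))"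
  by (simp add: softmax_def)

lemma sum_exp_pos: "0 < (\<Sum>j\<in>UNIV. exp ((h :: real ^ 'n) $ j))"
  by (intro sum_pos) auto

lemma softmax_pos: "0 < softmax h $ k"
  using sum_exp_pos[of h] by (simp add: softmax_nth)

lemma sum_softmax: "(\<Sum>k\<in>UNIV. softmax h $ k) = 1"
  using sum_exp_pos[of h] by (simp add: softmax_nth flip: sum_divide_distrib)

lemma ent_f_eq_ln_sum_exp_minus_mean:
  "ent_f h = ln (\<Sum>j\<in>UNIV. exp (h $ j)) - softmax_mean h"
proof -
  let ?Z = "\<Sum>j\<in>UNIV. exp (h $ j)"
  have "ln (softmax h $ i) = h $ i - ln ?Z" for i
    using sum_exp_pos[of h] by (simp add: softmax_nth ln_div)
  then have "ent_f h = (\<Sum>i\<in>UNIV. softmax h $ i) * ln ?Z - softmax_mean h"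
    by (simp add: ent_f_def shannon_entropy_def softmax_mean_def right_diff_distrib
        sum_subtractf sum_distrib_right)
  then show ?thesis by (simp add: sum_softmax)
qed

lemma has_derivative_vec_nth [derivative_intros]:
  "((\<lambda>x. x $ j) has_derivative (\<lambda>v. v $ j)) F"
  by (rule bounded_linear_imp_has_derivative[OF bounded_linear_vec_nth])

lemma has_derivative_ent_f:
  "(ent_f has_derivative (\<lambda>v. - (\<Sum>k\<in>UNIV. softmax h $ k * (h $ k - softmax_mean h) * v $ k))) (at h)"
proof -
  let ?Z = "\<Sum>j\<in>UNIV. exp (h $ j)"
  let ?N = "\<Sum>j\<in>UNIV. exp (h $ j) * h $ j"
  have Z: "?Z > 0" by (rule sum_exp_pos)
  have ent_f_explicit: "ent_f = (\<lambda>x. ln (\<Sum>j\<in>UNIV. exp (x $ j))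
      - (\<Sum>j\<in>UNIV. exp (x $ j) * x $ j) / (\<Sum>j\<in>UNIV. exp (x $ j)))"
    by (simp add: fun_eq_iff ent_f_eq_ln_sum_exp_minus_mean softmax_mean_def softmax_nth
        sum_divide_distrib)
  have "(ent_f has_derivative (\<lambda>v. (\<Sum>j\<in>UNIV. v $ j * exp (h $ j)) * inverse ?Z
      - (- ?N * (inverse ?Z * (\<Sum>j\<in>UNIV. v $ j * exp (h $ j)) * inverse ?Z)
         + (\<Sum>j\<in>UNIV. exp (h $ j) * v $ j + v $ j * exp (h $ j) * h $ j) / ?Z))) (at h)"
    unfolding ent_f_explicit using Z
    by (intro has_derivative_diff has_derivative_ln has_derivative_divide has_derivative_sum
        has_derivative_mult has_derivative_exp has_derivative_vec_nth) auto
  moreover have "(\<Sum>j\<in>UNIV. v $ j * exp (h $ j)) * inverse ?Z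
      - (- ?N * (inverse ?Z * (\<Sum>j\<in>UNIV. v $ j * exp (h $ j)) * inverse ?Z)
         + (\<Sum>j\<in>UNIV. exp (h $ j) * v $ j + v $ j * exp (h $ j) * h $ j) / ?Z)
    = - (\<Sum>k\<in>UNIV. softmax h $ k * (h $ k - softmax_mean h) * v $ k)" for v
  proof -
    define S1 where "S1 = (\<Sum>j\<in>UNIV. exp (h $ j) * v $ j)"
    define S2 where "S2 = (\<Sum>j\<in>UNIV. exp (h $ j) * h $ j * v $ j)"
    have mean_eq: "softmax_mean h = ?N / ?Z"
      by (simp add: softmax_mean_def softmax_nth sum_divide_distrib)
    have mean: "(\<Sum>k\<in>UNIV. softmax h $ k * (h $ k - softmax_mean h) * v $ k)
        = S2 / ?Z - softmax_mean h * S1 / ?Z"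
      by (simp add: softmax_nth S1_def S2_def sum_subtractf sum_divide_distrib sum_distrib_left
          left_diff_distrib right_diff_distrib diff_divide_distrib mult_ac)
    have sum12: "(\<Sum>j\<in>UNIV. exp (h $ j) * v $ j + v $ j * exp (h $ j) * h $ j) = S1 + S2"
      by (simp add: S1_def S2_def sum.distrib algebra_simps)
    have sum1: "(\<Sum>j\<in>UNIV. v $ j * exp (h $ j)) = S1"
      by (simp add: S1_def mult.commute)
    show ?thesis
      unfolding mean sum12 sum1 unfolding mean_eq using Z by (simp add: field_simps)
  qed
  ultimately show ?thesis
    by (simp add: fun_eq_iff)
qed

lemma has_derivative_sum_g1: "(sum_g1 has_derivative sum_g1) (at h)"
  unfolding sum_g1_def[abs_def] by (intro has_derivative_sum has_derivative_vec_nth)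

lemma has_derivative_sphere_g2: "(sphere_g2 r has_derivative (\<lambda>v. h \<bullet> v)) (at h)"
  unfolding sphere_g2_def[abs_def] inner_vec_def
  by (auto intro!: derivative_eq_intros simp: mult.commute)

lemma stationary_coordinate_eq:
  fixes h :: "real ^ 'n"
  assumes "\<forall>v. frechet_derivative ent_f (at h) v + l1 * frechet_derivative sum_g1 (at h) v
              + l2 * frechet_derivative (sphere_g2 r) (at h) v = 0"
  shows "l1 + l2 * h $ k = softmax h $ k * (h $ k - softmax_mean h)"
  using assms[rule_format, of "axis k 1"]
  unfolding frechet_derivative_at[OF has_derivative_ent_f, symmetric]
    frechet_derivative_at[OF has_derivative_sum_g1, symmetric]
    frechet_derivative_at[OF has_derivative_sphere_g2, symmetric] inner_axis
  by (simp add: sum_g1_def axis_def if_distrib[of "(*) _"] cong: if_cong)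

lemma Rolle_DERIV:
  fixes f f' :: "real \<Rightarrow> real"
  assumes "a < b" "f a = f b" "\<And>x. (f has_real_derivative f' x) (at x)"
  obtains z where "a < z" "z < b" "f' z = 0"
proof -
  have "continuous_on {a..b} f"
    using assms(3) by (meson DERIV_isCont continuous_at_imp_continuous_on)
  moreover have "(f has_derivative (*) (f' x)) (at x)" for x
    using assms(3) by (simp add: has_field_derivative_def)
  ultimately obtain z where "a < z" "z < b" "(*) (f' z) = (\<lambda>v. 0)"
    using Rolle_deriv[OF assms(1,2), of "\<lambda>x. (*) (f' x)"] by blast
  moreover from this(3) have "f' z = 0"
    by (metis mult_1_right)
  ultimately show ?thesis using that by blast
qed

lemma line_meets_exp_curve_thrice_imp_neg_slope:
  fixes c m l1 l2 x y z :: real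
  assumes "c > 0" "x < y" "y < z"
    and meets: "\<forall>t\<in>{x, y, z}. l1 + l2 * t = c * exp t * (t - m)"
  shows "l2 < 0"
proof -
  define \<phi> where "\<phi> t = l1 + l2 * t - c * exp t * (t - m)" for t
  define \<phi>' where "\<phi>' t = l2 - c * exp t * (t - m + 1)" for t
  define \<phi>'' where "\<phi>'' t = - c * exp t * (t - m + 2)" for t
  have d1: "(\<phi> has_real_derivative \<phi>' t) (at t)" for t
    unfolding \<phi>_def[abs_def] \<phi>'_def by (auto intro!: derivative_eq_intros simp: algebra_simps)
  have d2: "(\<phi>' has_real_derivative \<phi>'' t) (at t)" for t
    unfolding \<phi>'_def[abs_def] \<phi>''_def by (auto intro!: derivative_eq_intros simp: algebra_simps)
  have "\<phi> x = 0" "\<phi> y = 0" "\<phi> z = 0"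
    using meets by (simp_all add: \<phi>_def)
  obtain s where s: "x < s" "s < y" "\<phi>' s = 0"
    using Rolle_DERIV[OF \<open>x < y\<close> _ d1] \<open>\<phi> x = 0\<close> \<open>\<phi> y = 0\<close> by auto
  obtain t where t: "y < t" "t < z" "\<phi>' t = 0"
    using Rolle_DERIV[OF \<open>y < z\<close> _ d1] \<open>\<phi> y = 0\<close> \<open>\<phi> z = 0\<close> by auto
  obtain w where w: "s < w" "w < t" "\<phi>'' w = 0"
    using Rolle_DERIV[OF _ _ d2, of s t] s t by auto
  have "w = m - 2"
    using w(3) \<open>c > 0\<close> by (simp add: \<phi>''_def)
  have "l2 = c * exp s * (s - m + 1)"
    using s(3) by (simp add: \<phi>'_def)
  also have "\<dots> < 0"
    using \<open>c > 0\<close> \<open>s < w\<close> \<open>w = m - 2\<close> by (simp add: mult_pos_neg)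
  finally show ?thesis .
qed

lemma centred_affine_fit_slope_pos:
  fixes p x :: "'i::finite \<Rightarrow> real"
  assumes pos: "\<And>k. p k > 0" and sum_p: "sum p UNIV = 1"
    and fit: "\<And>k. l1 + l2 * x k = p k * (x k - (\<Sum>j\<in>UNIV. p j * x j))"
    and "x i \<noteq> x j"
  shows "l2 > 0"
proof (rule ccontr)
  assume "\<not> l2 > 0"
  then have "l2 \<le> 0" by simp
  define m where "m = (\<Sum>j\<in>UNIV. p j * x j)"
  have "Min (range x) \<in> range x"
    by (rule Min_in) auto
  then obtain k0 where "x k0 = Min (range x)"
    by (metis rangeE)
  then have min: "x k0 \<le> x k" for k
    by simp
  obtain k1 where "x k0 < x k1"
    using min \<open>x i \<noteq> x j\<close> by (metis order_le_less)
  have "0 < (\<Sum>k\<in>UNIV. p k * (x k - x k0))"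
    using pos min \<open>x k0 < x k1\<close>
    by (intro sum_pos2[of _ k1]) (auto intro!: mult_nonneg_nonneg less_imp_le[OF pos])
  also have "\<dots> = m - x k0"
    by (simp add: m_def sum_p right_diff_distrib sum_subtractf flip: sum_distrib_right)
  finally have "x k0 < m" by simp
  have "(\<Sum>k\<in>UNIV. l1 + l2 * x k) \<le> (\<Sum>k\<in>(UNIV :: 'i set). l1 + l2 * x k0)"
    by (rule sum_mono) (simp add: mult_left_mono_neg \<open>l2 \<le> 0\<close> min)
  also have "\<dots> = card (UNIV :: 'i set) * (p k0 * (x k0 - m))"
    by (simp add: fit m_def)
  also have "\<dots> < 0"
    using pos \<open>x k0 < m\<close> by (simp add: mult_pos_neg)
  finally have "(\<Sum>k\<in>UNIV. l1 + l2 * x k) < 0" .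
  moreover have "(\<Sum>k\<in>UNIV. l1 + l2 * x k) = 0"
    by (simp add: fit m_def[symmetric] right_diff_distrib sum_subtractf sum_p
        flip: sum_distrib_right)
  ultimately show False by simp
qed

theorem mainTheorem3:
  fixes h :: "real ^ 'n" and r l1 l2 :: real and a b c :: 'n
  assumes "CARD('n) \<ge> 3"
    and "r > 0"
    and "\<forall>v. frechet_derivative ent_f (at h) v + l1 * frechet_derivative sum_g1 (at h) v
              + l2 * frechet_derivative (sphere_g2 r) (at h) v = 0"
    and "h $ a \<ge> h $ b" and "h $ b \<ge> h $ c"
  shows "h $ a = h $ b \<or> h $ b = h $ c"
proof (rule ccontr)
  assume "\<not> ?thesis"
  then have "h $ c < h $ b" "h $ b < h $ a" "h $ a \<noteq> h $ c"
    using assms(4,5) by auto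
  have fit: "l1 + l2 * h $ k = softmax h $ k * (h $ k - softmax_mean h)" for k
    using stationary_coordinate_eq[OF assms(3)] .
  let ?Z = "\<Sum>j\<in>UNIV. exp (h $ j)"
  have meets: "\<forall>t\<in>{h $ c, h $ b, h $ a}. l1 + l2 * t = 1 / ?Z * exp t * (t - softmax_mean h)"
    using fit by (auto simp: softmax_nth)
  have "l2 < 0"
    using line_meets_exp_curve_thrice_imp_neg_slope[OF _ \<open>h $ c < h $ b\<close> \<open>h $ b < h $ a\<close> meets]
      sum_exp_pos[of h] by simp
  moreover have "l2 > 0"
    using fit unfolding softmax_mean_def
    by (rule centred_affine_fit_slope_pos[OF softmax_pos sum_softmax _ \<open>h $ a \<noteq> h $ c\<close>])
  ultimately show False
    by simp
qed

end
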